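(* Let $H$ be a Hilbert space, $(Y,\|\cdot\|_Y)$ a Banach space, $f:H\to Y$ locally Lipschitz, and $K\subset H$ compact. Then there exist $n_0\in\mathbb{N}$ and a constant $c(f,K)\ge0$ such that for every $n\ge n_0$ there is an $n$-dimensional linear subspace $E_n\subset H$ with $$\sup_{x\in K}\|f(x)-f(\pi_{E_n}(x))\|_Y\le c(f,K)\,\Omega_n(K,H),$$ where $\pi_{E_n}$ is the orthogonal projection onto $E_n$.
   Context: The Kolmogorov $n$-width is $\Omega_n(K,H)=\inf_{\dim E=n}\sup_{u\in K}\inf_{v\in E}\|u-v\|$, the infimum over $n$-dimensional linear subspaces $E\subset H$. *)

theory Defs
  imports "HOL-Analysis.Analysis"
begin

definition n_dim_subspace :: "'a::real_vector set \<Rightarrow> nat \<Rightarrow> bool" where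
  "n_dim_subspace E n \<longleftrightarrow> subspace E \<and>
     (\<exists>B. finite B \<and> independent B \<and> card B = n \<and> span B = E)"

definition orth_proj :: "'a::real_inner set \<Rightarrow> 'a \<Rightarrow> 'a" where
  "orth_proj E x = (THE y. y \<in> E \<and> (\<forall>e\<in>E. inner (x - y) e = 0))"

text \<open>Kolmogorov n-width of K in H (here H is the whole ambient type).\<close>
definition kolmogorov_width :: "nat \<Rightarrow> 'a::real_normed_vector set \<Rightarrow> real" where
  "kolmogorov_width n K =
     (INF E \<in> {E. n_dim_subspace E n}. (SUP u \<in> K. infdist u E))"

definition locally_lipschitz :: "('a::metric_space \<Rightarrow> 'b::metric_space) \<Rightarrow> bool" where
  "locally_lipschitz f \<longleftrightarrow>
     (\<forall>x. \<exists>r>0. \<exists>L. \<forall>y\<in>ball x r. \<forall>z\<in>ball x r. dist (f y) (f z) \<le> L * dist y z)"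

end

theory Submission
  imports Defs
begin

(* f is L-Lipschitz on a delta-neighbourhood of K, and a finite delta/4-net C of K lies in an
   n-dimensional subspace once n >= card C, so Omega_n(K) <= delta/4.  A subspace E attaining
   Omega_n(K) up to a factor 2 then moves every point of K by less than delta under the projection,
   and the Lipschitz bound gives c = 2L.  Such an E also exists when Omega_n(K) = 0: more than n
   independent vectors stay at positive distance from every n-dimensional subspace, so K itself
   lies in an n-dimensional subspace. *)

lemma inner_Gram_Schmidt_residual_eq_0:
  fixes U :: "'a::real_inner set"
  assumes "finite U" "pairwise orthogonal U" "c \<in> U"
  shows "(a - (\<Sum>b\<in>U. (b \<bullet> a / (b \<bullet> b)) *\<^sub>R b)) \<bullet> c = 0"
proof -
  have "(\<Sum>b\<in>U. (b \<bullet> a / (b \<bullet> b)) *\<^sub>R b) \<bullet> c = (\<Sum>b\<in>U. if b = c then c \<bullet> a else 0)"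
    unfolding inner_sum_left
    by (rule sum.cong) (use assms in \<open>auto simp: pairwise_def orthogonal_def\<close>)
  then show ?thesis
    using assms by (simp add: inner_diff_left inner_commute[of a c])
qed

lemma pairwise_orthogonal_spanning_set_exists:
  fixes T :: "'a::real_inner set"
  assumes "finite T"
  obtains U where "finite U" "pairwise orthogonal U" "span U = span T"
  using assms
proof (induction T arbitrary: thesis rule: finite_induct)
  case empty
  show ?case
    by (rule empty.prems[of "{}"]) auto
next
  case (insert a T)
  obtain U where U: "finite U" "pairwise orthogonal U" "span U = span T"
    by (rule insert.IH)
  define a' where "a' = a - (\<Sum>b\<in>U. (b \<bullet> a / (b \<bullet> b)) *\<^sub>R b)"
  have "a - a' \<in> span U"
    by (simp add: a'_def span_sum span_mul span_base)
  then have "span (insert a' U) = span (insert a U)"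
    by (rule eq_span_insert_eq[symmetric])
  also have "\<dots> = span (insert a T)"
    using U(3) by (simp add: span_insert)
  finally have span: "span (insert a' U) = span (insert a T)" .
  have "orthogonal a' c" if "c \<in> U" for c
    unfolding orthogonal_def a'_def by (rule inner_Gram_Schmidt_residual_eq_0[OF U(1,2) that])
  then have "pairwise orthogonal (insert a' U)"
    using U(2) by (auto simp: pairwise_insert orthogonal_commute)
  then show ?case
    using U(1) span by (intro insert.prems[of "insert a' U"]) simp_all
qed

lemma orth_proj_eqI:
  fixes E :: "'a::real_inner set"
  assumes "subspace E" "y \<in> E" "\<And>e. e \<in> E \<Longrightarrow> (x - y) \<bullet> e = 0"
  shows "orth_proj E x = y"
  unfolding orth_proj_def
proof (rule the_equality)
  show "y \<in> E \<and> (\<forall>e\<in>E. (x - y) \<bullet> e = 0)"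
    using assms(2,3) by blast
  fix y' assume y': "y' \<in> E \<and> (\<forall>e\<in>E. (x - y') \<bullet> e = 0)"
  then have "y' - y \<in> E"
    using assms(1,2) by (simp add: subspace_diff)
  have "(y' - y) \<bullet> (y' - y) = (x - y) \<bullet> (y' - y) - (x - y') \<bullet> (y' - y)"
    by (simp add: inner_diff_left)
  also have "\<dots> = 0"
    using assms(3) y' \<open>y' - y \<in> E\<close> by simp
  finally show "y' = y"
    by simp
qed

lemma orth_proj_span:
  fixes B :: "'a::real_inner set"
  assumes "finite B"
  shows "orth_proj (span B) x \<in> span B"
    and "\<And>e. e \<in> span B \<Longrightarrow> (x - orth_proj (span B) x) \<bullet> e = 0"
proof -
  obtain U where U: "finite U" "pairwise orthogonal U" "span U = span B"
    using pairwise_orthogonal_spanning_set_exists[OF assms] .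
  define p where "p = (\<Sum>b\<in>U. (b \<bullet> x / (b \<bullet> b)) *\<^sub>R b)"
  have p: "p \<in> span B"
    unfolding p_def U(3)[symmetric] by (simp add: span_sum span_mul span_base)
  have "orthogonal (x - p) e" if "e \<in> span U" for e
    using that by (rule orthogonal_to_span)
      (simp add: orthogonal_def p_def inner_Gram_Schmidt_residual_eq_0[OF U(1,2)])
  then have orth: "(x - p) \<bullet> e = 0" if "e \<in> span B" for e
    using that U(3) by (simp add: orthogonal_def)
  have "orth_proj (span B) x = p"
    by (rule orth_proj_eqI[OF subspace_span p orth])
  then show "orth_proj (span B) x \<in> span B" "\<And>e. e \<in> span B \<Longrightarrow> (x - orth_proj (span B) x) \<bullet> e = 0"
    using p orth by simp_all
qed

lemma norm_sub_orth_proj_le: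
  fixes B :: "'a::real_inner set"
  assumes "finite B" "e \<in> span B"
  shows "norm (x - orth_proj (span B) x) \<le> norm (x - e)"
proof -
  define p where "p = orth_proj (span B) x"
  have "p - e \<in> span B"
    using orth_proj_span(1)[OF assms(1)] assms(2) by (simp add: p_def span_diff)
  then have "orthogonal (x - p) (p - e)"
    using orth_proj_span(2)[OF assms(1)] by (simp add: orthogonal_def p_def)
  then have "(norm (x - e))\<^sup>2 = (norm (x - p))\<^sup>2 + (norm (p - e))\<^sup>2"
    using norm_add_Pythagorean by fastforce
  then have "(norm (x - p))\<^sup>2 \<le> (norm (x - e))\<^sup>2"
    by simp
  then show ?thesis
    unfolding p_def by (rule power2_le_imp_le) simp
qed

lemma infdist_span_eq_norm_sub_orth_proj:
  fixes B :: "'a::real_inner set"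
  assumes "finite B"
  shows "infdist x (span B) = norm (x - orth_proj (span B) x)"
proof (rule antisym)
  have ne: "span B \<noteq> {}"
    using span_zero by blast
  show "infdist x (span B) \<le> norm (x - orth_proj (span B) x)"
    using infdist_le[OF orth_proj_span(1)[OF assms]] by (simp add: dist_norm)
  show "norm (x - orth_proj (span B) x) \<le> infdist x (span B)"
    unfolding infdist_notempty[OF ne]
    by (rule cINF_greatest[OF ne]) (simp add: dist_norm norm_sub_orth_proj_le[OF assms])
qed

lemma n_dim_subspaceE:
  assumes "n_dim_subspace E n"
  obtains B where "finite B" "independent B" "card B = n" "E = span B"
  using assms unfolding n_dim_subspace_def by blast

lemma n_dim_subspace_extend:
  fixes B E0 :: "'a::real_vector set"
  assumes "finite B" "independent B" "card B \<le> n" "n_dim_subspace E0 n"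
  obtains E where "n_dim_subspace E n" "B \<subseteq> E"
proof -
  obtain B0 where B0: "finite B0" "independent B0" "card B0 = n" "E0 = span B0"
    using assms(4) by (rule n_dim_subspaceE)
  obtain B' where B': "B \<subseteq> B'" "B' \<subseteq> B \<union> B0" "independent B'" "B \<union> B0 \<subseteq> span B'"
    by (rule maximal_independent_subset_extend[OF Un_upper1 assms(2)])
  have "finite B'"
    using B'(2) by (rule finite_subset) (simp add: assms(1) B0(1))
  have "B0 \<subseteq> span B'"
    using B'(4) by blast
  then have "n \<le> card B'"
    using independent_span_bound[OF \<open>finite B'\<close> B0(2)] B0(3) by simp
  then have "n - card B \<le> card (B' - B)"
    by (simp add: card_Diff_subset[OF assms(1) B'(1)])
  then obtain C where C: "C \<subseteq> B' - B" "card C = n - card B" "finite C"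
    by (rule obtain_subset_with_card_n)
  have "B \<inter> C = {}"
    using C(1) by blast
  then have "card (B \<union> C) = n"
    using assms(3) by (simp add: card_Un_disjoint[OF assms(1) C(3)] C(2))
  moreover have "independent (B \<union> C)"
    by (rule independent_mono[OF B'(3)]) (use B'(1) C(1) in blast)
  moreover have "finite (B \<union> C)"
    using assms(1) C(3) by simp
  ultimately have "n_dim_subspace (span (B \<union> C)) n"
    unfolding n_dim_subspace_def by (blast intro: subspace_span)
  then show thesis
    by (rule that) (auto intro: span_base)
qed

lemma independent_subset_spanning:
  fixes V :: "'a::real_vector set"
  assumes "\<And>S. S \<subseteq> V \<Longrightarrow> finite S \<Longrightarrow> independent S \<Longrightarrow> card S \<le> n"
  obtains B where "B \<subseteq> V" "finite B" "independent B" "card B \<le> n" "V \<subseteq> span B"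
proof -
  obtain B where B: "B \<subseteq> V" "independent B" "V \<subseteq> span B"
    by (rule maximal_independent_subset_extend[OF empty_subsetI independent_empty])
  have "finite B"
  proof (rule ccontr)
    assume "infinite B"
    then obtain S where S: "finite S" "card S = Suc n" "S \<subseteq> B"
      using infinite_arbitrarily_large[of B "Suc n"] by blast
    have "independent S"
      using B(2) S(3) by (rule independent_mono)
    then have "card S \<le> n"
      using assms S(1,3) B(1) by simp
    then show False
      using S(2) by simp
  qed
  show thesis
    by (rule that[OF B(1) \<open>finite B\<close> B(2) assms[OF B(1) \<open>finite B\<close> B(2)] B(3)])
qed

lemma n_dim_subspace_superset:
  fixes V E0 :: "'a::real_vector set"
  assumes "\<And>S. S \<subseteq> V \<Longrightarrow> finite S \<Longrightarrow> independent S \<Longrightarrow> card S \<le> n"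
    and "n_dim_subspace E0 n"
  obtains E where "n_dim_subspace E n" "V \<subseteq> E"
proof -
  obtain B where B: "B \<subseteq> V" "finite B" "independent B" "card B \<le> n" "V \<subseteq> span B"
    by (rule independent_subset_spanning[of V n, OF assms(1)])
  obtain E where E: "n_dim_subspace E n" "B \<subseteq> E"
    using n_dim_subspace_extend[OF B(2-4) assms(2)] .
  have "span B \<subseteq> E"
    by (rule span_minimal[OF E(2)]) (use E(1) in \<open>simp add: n_dim_subspace_def\<close>)
  then show thesis
    using that E(1) B(5) by blast
qed

lemma nontrivial_vanishing_combination_exists:
  fixes e :: "'b \<Rightarrow> 'a::real_vector"
  assumes "finite S" "finite B" "card B < card S" "e ` S \<subseteq> span B"
  obtains a where "(\<Sum>v\<in>S. a v *\<^sub>R e v) = 0" "\<exists>v\<in>S. a v \<noteq> 0"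
proof (cases "inj_on e S")
  case True
  have "dependent (e ` S)"
    using independent_span_bound[OF assms(2) _ assms(4)] card_image[OF True] assms(3) by auto
  then obtain u where u: "\<exists>w\<in>e ` S. u w \<noteq> 0" "(\<Sum>w\<in>e ` S. u w *\<^sub>R w) = 0"
    using dependent_finite[of "e ` S"] assms(1) by blast
  show thesis
  proof (rule that[of "u \<circ> e"])
    show "(\<Sum>v\<in>S. (u \<circ> e) v *\<^sub>R e v) = 0"
      using u(2) by (simp add: sum.reindex[OF True])
    show "\<exists>v\<in>S. (u \<circ> e) v \<noteq> 0"
      using u(1) by auto
  qed
next
  case False
  then obtain v w where vw: "v \<in> S" "w \<in> S" "v \<noteq> w" "e v = e w"
    unfolding inj_on_def by blast
  define a where "a x = (if x = v then 1 else if x = w then -1 else 0::real)" for x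
  have "(\<Sum>x\<in>S. a x *\<^sub>R e x) = (\<Sum>x\<in>S. (if x = v then e v else 0) - (if x = w then e w else 0))"
    using vw(3) by (intro sum.cong) (auto simp: a_def)
  also have "\<dots> = 0"
    using assms(1) vw(1,2,4) by (simp add: sum_subtractf)
  finally show thesis
    using vw(1) by (intro that[of a]) (auto simp: a_def)
qed

lemma abs_coeff_mult_infdist_le_norm_sum:
  fixes v :: "'a::real_normed_vector"
  assumes "finite S" "v \<in> S"
  shows "\<bar>a v\<bar> * infdist v (span (S - {v})) \<le> norm (\<Sum>w\<in>S. a w *\<^sub>R w)"
proof (cases "a v = 0")
  case True
  then show ?thesis by simp
next
  case False
  define u where "u = - (1 / a v) *\<^sub>R (\<Sum>w\<in>S - {v}. a w *\<^sub>R w)"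
  have "u \<in> span (S - {v})"
    unfolding u_def by (intro span_scale span_sum span_base) auto
  then have "infdist v (span (S - {v})) \<le> norm (v - u)"
    using infdist_le by (metis dist_norm)
  moreover have "(\<Sum>w\<in>S. a w *\<^sub>R w) = a v *\<^sub>R (v - u)"
    using assms False by (simp add: sum.remove u_def scaleR_add_right)
  ultimately show ?thesis
    by (simp add: mult_left_mono)
qed

lemma infdist_span_remove_pos:
  fixes S :: "'a::real_inner set"
  assumes "finite S" "independent S" "v \<in> S"
  shows "0 < infdist v (span (S - {v}))"
proof -
  have "v \<notin> span (S - {v})"
    using assms(2,3) unfolding dependent_def by blast
  moreover have "orth_proj (span (S - {v})) v \<in> span (S - {v})"
    using assms(1) by (simp add: orth_proj_span(1))
  ultimately have "v \<noteq> orth_proj (span (S - {v})) v"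
    by auto
  then show ?thesis
    using assms(1) by (simp add: infdist_span_eq_norm_sub_orth_proj)
qed

lemma independent_far_from_n_dim_subspaces:
  fixes S :: "'a::real_inner set"
  assumes "finite S" "independent S" "n < card S"
  obtains \<epsilon> where "0 < \<epsilon>" "\<And>E. n_dim_subspace E n \<Longrightarrow> \<exists>v\<in>S. \<epsilon> \<le> infdist v E"
proof -
  define N where "N = real (card S)"
  define m where "m = Min ((\<lambda>v. infdist v (span (S - {v}))) ` S)"
  have "S \<noteq> {}" "0 < N"
    using assms(3) by (auto simp: N_def)
  have "0 < m"
    unfolding m_def using assms(1,2) \<open>S \<noteq> {}\<close> by (simp add: Min_gr_iff infdist_span_remove_pos)
  have m_le: "m \<le> infdist v (span (S - {v}))" if "v \<in> S" for v
    unfolding m_def using assms(1) that by simp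
  show thesis
  proof (rule that)
    show "0 < m / (2 * N)"
      using \<open>0 < m\<close> \<open>0 < N\<close> by simp
    fix E :: "'a set"
    assume "n_dim_subspace E n"
    then obtain BE where BE: "finite BE" "card BE = n" "E = span BE"
      by (rule n_dim_subspaceE)
    show "\<exists>v\<in>S. m / (2 * N) \<le> infdist v E"
    proof (rule ccontr)
      \<comment> \<open>A vanishing combination of the projections \<open>orth_proj E v\<close> gives
        \<open>norm (\<Sum>a v *\<^sub>R v) \<le> m / (2 N) * \<Sum>\<bar>a v\<bar>\<close>, while the distance of each \<open>v\<close> to the span
        of the others gives \<open>norm (\<Sum>a v *\<^sub>R v) \<ge> m / N * \<Sum>\<bar>a v\<bar>\<close>.\<close>
      assume "\<not> ?thesis"
      then have close: "norm (v - orth_proj E v) \<le> m / (2 * N)" if "v \<in> S" for v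
        using that BE by (auto simp: infdist_span_eq_norm_sub_orth_proj)
      have "card BE < card S"
        using BE(2) assms(3) by simp
      moreover have "orth_proj E ` S \<subseteq> span BE"
        using orth_proj_span(1)[OF BE(1)] BE(3) by blast
      ultimately obtain a where a: "(\<Sum>v\<in>S. a v *\<^sub>R orth_proj E v) = 0" "\<exists>v\<in>S. a v \<noteq> 0"
        by (rule nontrivial_vanishing_combination_exists[OF assms(1) BE(1)])
      then obtain v0 where "v0 \<in> S" "a v0 \<noteq> 0"
        by blast
      define A where "A = (\<Sum>v\<in>S. \<bar>a v\<bar>)"
      have "0 < A"
        unfolding A_def by (rule sum_pos2[OF assms(1) \<open>v0 \<in> S\<close>]) (simp_all add: \<open>a v0 \<noteq> 0\<close>)
      have "m * A \<le> (\<Sum>v\<in>S. \<bar>a v\<bar> * infdist v (span (S - {v})))"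
        unfolding A_def sum_distrib_left
      proof (rule sum_mono)
        fix v assume "v \<in> S"
        show "m * \<bar>a v\<bar> \<le> \<bar>a v\<bar> * infdist v (span (S - {v}))"
          using mult_right_mono[OF m_le[OF \<open>v \<in> S\<close>], of "\<bar>a v\<bar>"] by (simp add: mult.commute)
      qed
      also have "\<dots> \<le> (\<Sum>v\<in>S. norm (\<Sum>w\<in>S. a w *\<^sub>R w))"
        by (rule sum_mono) (rule abs_coeff_mult_infdist_le_norm_sum[OF assms(1)])
      finally have lower: "m * A \<le> N * norm (\<Sum>v\<in>S. a v *\<^sub>R v)"
        by (simp add: N_def)
      have "(\<Sum>v\<in>S. a v *\<^sub>R v) = (\<Sum>v\<in>S. a v *\<^sub>R (v - orth_proj E v))"
        using a(1) by (simp add: scaleR_diff_right sum_subtractf)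
      also have "norm \<dots> \<le> (\<Sum>v\<in>S. \<bar>a v\<bar> * (m / (2 * N)))"
      proof (intro order.trans[OF norm_sum] sum_mono)
        fix v assume "v \<in> S"
        show "norm (a v *\<^sub>R (v - orth_proj E v)) \<le> \<bar>a v\<bar> * (m / (2 * N))"
          unfolding norm_scaleR using close[OF \<open>v \<in> S\<close>] by (rule mult_left_mono) simp
      qed
      finally have upper: "norm (\<Sum>v\<in>S. a v *\<^sub>R v) \<le> A * (m / (2 * N))"
        by (simp only: A_def sum_distrib_right)
      have "N * norm (\<Sum>v\<in>S. a v *\<^sub>R v) \<le> N * (A * (m / (2 * N)))"
        using upper \<open>0 < N\<close> by (intro mult_left_mono) simp_all
      also have "\<dots> = m * A / 2"
        using \<open>0 < N\<close> by simp
      finally show False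
        using lower mult_pos_pos[OF \<open>0 < m\<close> \<open>0 < A\<close>] by linarith
    qed
  qed
qed

lemma bdd_above_infdist_image:
  assumes "compact K"
  shows "bdd_above ((\<lambda>u. infdist u E) ` K)"
  using compact_continuous_image[OF _ assms, of "\<lambda>u. infdist u E"]
  by (simp add: continuous_on_infdist bounded_imp_bdd_above compact_imp_bounded)

lemma infdist_le_SUP:
  assumes "compact K" "u \<in> K"
  shows "infdist u E \<le> (SUP v\<in>K. infdist v E)"
  by (rule cSUP_upper[OF assms(2) bdd_above_infdist_image[OF assms(1)]])

lemma SUP_infdist_nonneg:
  assumes "compact K" "K \<noteq> {}"
  shows "0 \<le> (SUP u\<in>K. infdist u E)"
proof -
  obtain u where "u \<in> K"
    using assms(2) by blast
  then have "infdist u E \<le> (SUP v\<in>K. infdist v E)"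
    by (rule infdist_le_SUP[OF assms(1)])
  then show ?thesis
    using infdist_nonneg[of u E] by linarith
qed

lemma kolmogorov_width_nonneg:
  fixes K E0 :: "'a::real_normed_vector set"
  assumes "compact K" "K \<noteq> {}" "n_dim_subspace E0 n"
  shows "0 \<le> kolmogorov_width n K"
  unfolding kolmogorov_width_def
  by (rule cINF_greatest) (use assms SUP_infdist_nonneg in auto)

lemma kolmogorov_width_le:
  assumes "compact K" "K \<noteq> {}" "n_dim_subspace E n"
  shows "kolmogorov_width n K \<le> (SUP u\<in>K. infdist u E)"
proof -
  have "bdd_below ((\<lambda>E. SUP u\<in>K. infdist u E) ` {E. n_dim_subspace E n})"
    by (rule bdd_belowI2[where m=0]) (rule SUP_infdist_nonneg[OF assms(1,2)])
  then show ?thesis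
    unfolding kolmogorov_width_def by (rule cINF_lower) (simp add: assms(3))
qed

lemma kolmogorov_width_lessE:
  fixes K E0 :: "'a::real_normed_vector set"
  assumes "n_dim_subspace E0 n" "kolmogorov_width n K < r"
  obtains E where "n_dim_subspace E n" "(SUP u\<in>K. infdist u E) < r"
  using assms cInf_lessD[of "(\<lambda>E. SUP u\<in>K. infdist u E) ` {E. n_dim_subspace E n}" r]
  unfolding kolmogorov_width_def by blast

lemma kolmogorov_width_eq_0_imp_subspace:
  fixes K E0 :: "'a::real_inner set"
  assumes "compact K" "kolmogorov_width n K = 0" "n_dim_subspace E0 n"
  obtains E where "n_dim_subspace E n" "K \<subseteq> E"
proof (rule n_dim_subspace_superset[OF _ assms(3)])
  fix S assume S: "S \<subseteq> K" "finite S" "independent S"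
  show "card S \<le> n"
  proof (rule ccontr)
    assume "\<not> card S \<le> n"
    then have "n < card S"
      by simp
    then obtain \<epsilon> where "0 < \<epsilon>" and far: "\<And>E. n_dim_subspace E n \<Longrightarrow> \<exists>v\<in>S. \<epsilon> \<le> infdist v E"
      using independent_far_from_n_dim_subspaces[OF S(2,3)] by blast
    have "kolmogorov_width n K < \<epsilon>"
      using assms(2) \<open>0 < \<epsilon>\<close> by simp
    then obtain E where E: "n_dim_subspace E n" "(SUP u\<in>K. infdist u E) < \<epsilon>"
      by (rule kolmogorov_width_lessE[OF assms(3)])
    then obtain v where "v \<in> S" "\<epsilon> \<le> infdist v E"
      using far by blast
    then show False
      using infdist_le_SUP[OF assms(1), of v E] S(1) E(2) by auto
  qed
qed

lemma kolmogorov_width_almost_attained: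
  fixes K E0 :: "'a::real_inner set"
  assumes "compact K" "K \<noteq> {}" "n_dim_subspace E0 n"
  obtains E where "n_dim_subspace E n" "(SUP u\<in>K. infdist u E) \<le> 2 * kolmogorov_width n K"
proof (cases "kolmogorov_width n K = 0")
  case True
  then obtain E where "n_dim_subspace E n" "K \<subseteq> E"
    using kolmogorov_width_eq_0_imp_subspace[OF assms(1) _ assms(3)] by blast
  then show thesis
    using that True assms(2) by (simp add: subset_eq)
next
  case False
  then have "kolmogorov_width n K < 2 * kolmogorov_width n K"
    using kolmogorov_width_nonneg[OF assms] by simp
  then obtain E where "n_dim_subspace E n" "(SUP u\<in>K. infdist u E) < 2 * kolmogorov_width n K"
    by (rule kolmogorov_width_lessE[OF assms(3)])
  then show thesis
    using that by simp
qed

lemma kolmogorov_width_le_net_radius: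
  fixes K C E0 :: "'a::real_normed_vector set"
  assumes "compact K" "K \<noteq> {}" "finite C" "K \<subseteq> (\<Union>c\<in>C. ball c r)" "card C \<le> n"
    and "n_dim_subspace E0 n"
  shows "kolmogorov_width n K \<le> r"
proof -
  have "card S \<le> n" if "S \<subseteq> C" "finite S" "independent S" for S
    using card_mono[OF assms(3) that(1)] assms(5) by linarith
  then obtain E where E: "n_dim_subspace E n" "C \<subseteq> E"
    by (rule n_dim_subspace_superset[OF _ assms(6)])
  have "(SUP u\<in>K. infdist u E) \<le> r"
  proof (rule cSUP_least[OF assms(2)])
    fix u assume "u \<in> K"
    then obtain c where "c \<in> C" "dist c u < r"
      using assms(4) by auto
    then show "infdist u E \<le> r"
      using E(2) infdist_le2[of c E u r] by (auto simp: dist_commute)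
  qed
  then show ?thesis
    using kolmogorov_width_le[OF assms(1,2) E(1)] by linarith
qed

lemma locally_lipschitz_uniform_near_compact:
  fixes f :: "'a::metric_space \<Rightarrow> 'b::metric_space"
  assumes "locally_lipschitz f" "compact K"
  obtains \<delta> L where "0 < \<delta>" "0 \<le> L"
    "\<And>x y. x \<in> K \<Longrightarrow> dist x y < \<delta> \<Longrightarrow> dist (f x) (f y) \<le> L * dist x y"
proof -
  have "\<forall>x. \<exists>r. 0 < r \<and> (\<exists>L. \<forall>y\<in>ball x r. \<forall>z\<in>ball x r. dist (f y) (f z) \<le> L * dist y z)"
    using assms(1) unfolding locally_lipschitz_def by blast
  then obtain r where r: "\<forall>x. 0 < r x \<and>
      (\<exists>L. \<forall>y\<in>ball x (r x). \<forall>z\<in>ball x (r x). dist (f y) (f z) \<le> L * dist y z)"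
    by (rule choice[THEN exE])
  then have "\<forall>x. \<exists>L. \<forall>y\<in>ball x (r x). \<forall>z\<in>ball x (r x). dist (f y) (f z) \<le> L * dist y z"
    by blast
  then obtain Lip where Lip: "\<forall>x. \<forall>y\<in>ball x (r x). \<forall>z\<in>ball x (r x). dist (f y) (f z) \<le> Lip x * dist y z"
    by (rule choice[THEN exE])
  have r_pos: "0 < r x" for x
    using r by blast
  then have cover: "K \<subseteq> (\<Union>c\<in>K. ball c (r c / 2))"
    by (auto intro: centre_in_ball)
  obtain C where C: "C \<subseteq> K" "finite C" "K \<subseteq> (\<Union>c\<in>C. ball c (r c / 2))"
    by (rule compactE_image[OF assms(2) _ cover]) simp
  define \<delta> where "\<delta> = Min (insert 1 ((\<lambda>c. r c / 2) ` C))"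
  define L where "L = Max (insert 0 ((\<lambda>c. \<bar>Lip c\<bar>) ` C))"
  show thesis
  proof (rule that)
    show "0 < \<delta>" "0 \<le> L"
      using C(2) r_pos by (auto simp: \<delta>_def L_def)
    fix x y assume "x \<in> K" "dist x y < \<delta>"
    then obtain c where c: "c \<in> C" "dist c x < r c / 2"
      using C(3) by auto
    moreover have "\<delta> \<le> r c / 2"
      unfolding \<delta>_def using C(2) c(1) by (intro Min_le) auto
    ultimately have "x \<in> ball c (r c)" "y \<in> ball c (r c)"
      using dist_triangle[of c y x] \<open>dist x y < \<delta>\<close> r_pos[of c] by (auto simp: dist_commute)
    then have "dist (f x) (f y) \<le> Lip c * dist x y"
      using Lip by blast
    also have "\<dots> \<le> L * dist x y"
    proof (rule mult_right_mono)
      have "\<bar>Lip c\<bar> \<le> L"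
        unfolding L_def using C(2) c(1) by (intro Max_ge) auto
      then show "Lip c \<le> L"
        using abs_ge_self[of "Lip c"] by linarith
    qed simp
    finally show "dist (f x) (f y) \<le> L * dist x y" .
  qed
qed

lemma SUP_norm_sub_orth_proj_le:
  fixes f :: "'a::real_inner \<Rightarrow> 'b::real_normed_vector"
  assumes "compact K" "K \<noteq> {}" "n_dim_subspace E n" "0 \<le> L"
    and Lip: "\<And>x y. x \<in> K \<Longrightarrow> dist x y < \<delta> \<Longrightarrow> dist (f x) (f y) \<le> L * dist x y"
    and "(SUP u\<in>K. infdist u E) \<le> r" "r < \<delta>"
  shows "(SUP x\<in>K. norm (f x - f (orth_proj E x))) \<le> L * r"
proof (rule cSUP_least[OF assms(2)])
  fix x assume "x \<in> K"
  obtain B where "finite B" "E = span B"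
    using assms(3) by (rule n_dim_subspaceE)
  then have "dist x (orth_proj E x) \<le> r"
    using infdist_le_SUP[OF assms(1) \<open>x \<in> K\<close>, of E] assms(6)
    by (simp add: infdist_span_eq_norm_sub_orth_proj dist_norm)
  then have "dist x (orth_proj E x) < \<delta>"
    using assms(7) by linarith
  then have "dist (f x) (f (orth_proj E x)) \<le> L * dist x (orth_proj E x)"
    by (rule Lip[OF \<open>x \<in> K\<close>])
  also have "\<dots> \<le> L * r"
    using \<open>dist x (orth_proj E x) \<le> r\<close> assms(4) by (rule mult_left_mono)
  finally show "norm (f x - f (orth_proj E x)) \<le> L * r"
    by (simp add: dist_norm)
qed

theorem lemma4p8:
  fixes f :: "'a::{real_inner, complete_space} \<Rightarrow> 'b::banach"
    and K :: "'a set"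
  assumes "locally_lipschitz f"
    and "compact K"
  shows "\<exists>n0::nat. \<exists>c::real. c \<ge> 0 \<and>
           (\<forall>n\<ge>n0. (\<exists>E::'a set. n_dim_subspace E n) \<longrightarrow>
              (\<exists>E. n_dim_subspace E n \<and>
                 (SUP x \<in> K. norm (f x - f (orth_proj E x))) \<le> c * kolmogorov_width n K))"
proof (cases "K = {}")
  case True
  \<comment> \<open>Both suprema are then the junk value \<open>Sup {}\<close>.\<close>
  then show ?thesis
    by (intro exI[of _ 0] exI[of _ 1]) (auto simp: kolmogorov_width_def)
next
  case False
  obtain \<delta> L where "0 < \<delta>" "0 \<le> L"
    and Lip: "\<And>x y. x \<in> K \<Longrightarrow> dist x y < \<delta> \<Longrightarrow> dist (f x) (f y) \<le> L * dist x y"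
    using locally_lipschitz_uniform_near_compact[OF assms] by blast
  have cover: "K \<subseteq> (\<Union>c\<in>K. ball c (\<delta> / 4))"
    using \<open>0 < \<delta>\<close> by auto
  obtain C where C: "C \<subseteq> K" "finite C" "K \<subseteq> (\<Union>c\<in>C. ball c (\<delta> / 4))"
    by (rule compactE_image[OF assms(2) _ cover]) simp
  have "\<exists>E. n_dim_subspace E n \<and> (SUP x\<in>K. norm (f x - f (orth_proj E x))) \<le> 2 * L * kolmogorov_width n K"
    if n: "card C \<le> n" and E0: "n_dim_subspace E0 n" for n and E0 :: "'a set"
  proof -
    obtain E where E: "n_dim_subspace E n" "(SUP u\<in>K. infdist u E) \<le> 2 * kolmogorov_width n K"
      using kolmogorov_width_almost_attained[OF assms(2) False E0] .
    have "2 * kolmogorov_width n K < \<delta>"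
      using kolmogorov_width_le_net_radius[OF assms(2) False C(2,3) n E0] \<open>0 < \<delta>\<close> by linarith
    then have "(SUP x\<in>K. norm (f x - f (orth_proj E x))) \<le> L * (2 * kolmogorov_width n K)"
      using SUP_norm_sub_orth_proj_le[OF assms(2) False E(1) \<open>0 \<le> L\<close> Lip E(2)] by blast
    then show ?thesis
      using E(1) by (auto simp: mult.assoc mult.left_commute)
  qed
  then show ?thesis
    using \<open>0 \<le> L\<close> by (intro exI[of _ "card C"] exI[of _ "2 * L"]) auto
qed

end
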